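(* Let $\mathbb{M}_2$ be the $2\times2$ complex matrices, $E_{12}$ the standard matrix unit, and $\mathfrak{S}\subset\mathbb{M}_2$ the operator system spanned by $I,E_{12},E_{21}$. For a unit vector $\xi=\xi_1e_1+\xi_2e_2\in\mathbb{C}^2$ let $\omega_\xi(a)=\langle a\xi,\xi\rangle$. Then: if $\xi_1$ is not of the form $\alpha\overline{\xi_2}$ with $|\alpha|=1$, $\omega_\xi$ does not have the unique extension property with respect to $\mathfrak{S}$; if $\xi_1=\alpha\overline{\xi_2}$ with $|\alpha|=1$, $\omega_\xi$ is $\mathfrak{S}$-peaking. Consequently every pure state on $\mathbb{M}_2$ having the unique extension property with respect to $\mathfrak{S}$ is $\mathfrak{S}$-peaking, while not every pure state on $\mathbb{M}_2$ is $\mathfrak{S}$-peaking (even though every irreducible $*$-representation of $\mathbb{M}_2$ is $\mathfrak{S}$-peaking).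
   Context: A state $\psi$ on $\mathfrak{A}$ is $\mathfrak{S}$-peaking if there is a self-adjoint $s\in\mathfrak{S}$ with $\|s\|=1$ such that $\psi(s)=1>|\phi(s)|$ for every state $\phi\neq\psi$ on $\mathfrak{A}$. A state $\psi$ has the unique extension property with respect to $\mathfrak{S}$ if it is the only state on $\mathfrak{A}$ agreeing with $\psi$ on $\mathfrak{S}$. A unital $*$-representation $\pi$ is $\mathfrak{S}$-peaking if there is $s\in\mathfrak{S}$ with $\|\pi(s)\|>\|\rho(s)\|$ for every unital $*$-representation $\rho$ such that $\|\pi(a)\|\le\|\rho(a)\|$ fails for some $a$. *)

theory Defs
  imports "HOL-Analysis.Analysis"
begin

type_synonym cvec2 = "complex^2"
type_synonym mat2 = "complex^2^2"

definition cinner2 :: "cvec2 \<Rightarrow> cvec2 \<Rightarrow> complex" where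
  "cinner2 x y = (\<Sum>i\<in>UNIV. x$i * cnj (y$i))"

definition adj2 :: "mat2 \<Rightarrow> mat2" where
  "adj2 A = (\<chi> i j. cnj (A$j$i))"

definition smult2 :: "complex \<Rightarrow> mat2 \<Rightarrow> mat2" where
  "smult2 c A = (\<chi> i j. c * A$i$j)"

definition mnorm2 :: "mat2 \<Rightarrow> real" where
  "mnorm2 A = onorm (\<lambda>x::cvec2. A *v x)"

definition munit :: "2 \<Rightarrow> 2 \<Rightarrow> mat2" where
  "munit k l = (\<chi> i j. if i = k \<and> j = l then 1 else 0)"

definition E12 :: mat2 where "E12 = munit 1 2"
definition E21 :: mat2 where "E21 = munit 2 1"

definition opsysS :: "mat2 set" where
  "opsysS = {smult2 a (mat 1) + smult2 b E12 + smult2 c E21 | a b c. True}"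

definition positive2 :: "mat2 \<Rightarrow> bool" where
  "positive2 A \<longleftrightarrow> (\<forall>x. Im (cinner2 (A *v x) x) = 0 \<and> Re (cinner2 (A *v x) x) \<ge> 0)"

definition is_state :: "(mat2 \<Rightarrow> complex) \<Rightarrow> bool" where
  "is_state \<phi> \<longleftrightarrow>
     (\<forall>A B. \<phi> (A + B) = \<phi> A + \<phi> B) \<and>
     (\<forall>c A. \<phi> (smult2 c A) = c * \<phi> A) \<and>
     (\<forall>A. positive2 A \<longrightarrow> Im (\<phi> A) = 0 \<and> Re (\<phi> A) \<ge> 0) \<and>
     \<phi> (mat 1) = 1"

definition pure_state :: "(mat2 \<Rightarrow> complex) \<Rightarrow> bool" where
  "pure_state \<psi> \<longleftrightarrow> is_state \<psi> \<and>
     (\<forall>\<phi>1 \<phi>2 (t::real). is_state \<phi>1 \<and> is_state \<phi>2 \<and> 0 < t \<and> t < 1 \<and>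
        \<psi> = (\<lambda>A. of_real t * \<phi>1 A + of_real (1 - t) * \<phi>2 A) \<longrightarrow> \<phi>1 = \<psi> \<and> \<phi>2 = \<psi>)"

definition S_peaking_state :: "(mat2 \<Rightarrow> complex) \<Rightarrow> bool" where
  "S_peaking_state \<psi> \<longleftrightarrow> (\<exists>s\<in>opsysS. adj2 s = s \<and> mnorm2 s = 1 \<and> \<psi> s = 1 \<and>
      (\<forall>\<phi>. is_state \<phi> \<and> \<phi> \<noteq> \<psi> \<longrightarrow> cmod (\<phi> s) < 1))"

definition unique_ext_prop :: "(mat2 \<Rightarrow> complex) \<Rightarrow> bool" where
  "unique_ext_prop \<psi> \<longleftrightarrow> (\<forall>\<phi>. is_state \<phi> \<and> (\<forall>s\<in>opsysS. \<phi> s = \<psi> s) \<longrightarrow> \<phi> = \<psi>)"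

definition omega :: "cvec2 \<Rightarrow> mat2 \<Rightarrow> complex" where
  "omega \<xi> A = cinner2 (A *v \<xi>) \<xi>"

end

theory Submission
  imports Defs
begin

text \<open>A state \<phi> on M_2 is determined by p = \<phi> E11 \<in> [0,1] and w = \<phi> E12, subject to
  |w|^2 \<le> p (1 - p); its restriction to S only remembers w. Hence \<phi> has the unique
  extension property iff w determines p, i.e. iff |w| = 1/2 (which forces p = 1/2): for
  |w| < 1/2 the two vector states with p (1 - p) = |w|^2 are distinct extensions. When
  |w| = 1/2 the element s = I/2 + cnj w E12 + w E21 of S is a rank-one projection with
  \<phi> s = 1, and any state \<theta> with |\<theta> s| = 1 must have \<theta> E12 = w, hence \<theta> = \<phi>. For a
  vector state, |w| = |\<xi>1| |\<xi>2| equals 1/2 exactly when |\<xi>1| = |\<xi>2|. Since S-peaking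
  states have the unique extension property, the pure state of e1, which has w = 0, is not
  S-peaking.\<close>

lemma norm_cvec2_sq: "(norm (x::cvec2))\<^sup>2 = (cmod (x$1))\<^sup>2 + (cmod (x$2))\<^sup>2"
  by (simp add: norm_vec_def L2_set_def sum_2)

lemma norm_cvec2_eq_1_iff: "norm (x::cvec2) = 1 \<longleftrightarrow> (cmod (x$1))\<^sup>2 + (cmod (x$2))\<^sup>2 = 1"
  by (simp add: norm_vec_def L2_set_def sum_2)

lemma norm_axis1_cvec2: "norm (axis 1 1 :: cvec2) = 1"
  by (simp add: norm_cvec2_eq_1_iff axis_def)

lemma mat2_eq_iff:
  "(A::mat2) = B \<longleftrightarrow> A$1$1 = B$1$1 \<and> A$1$2 = B$1$2 \<and> A$2$1 = B$2$1 \<and> A$2$2 = B$2$2"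
  by (auto simp: vec_eq_iff forall_2)

lemma matrix_vector_mult_2:
  "((A::mat2) *v x)$1 = A$1$1 * x$1 + A$1$2 * x$2"
  "(A *v x)$2 = A$2$1 * x$1 + A$2$2 * x$2"
  by (simp_all add: matrix_vector_mult_def sum_2)

lemma cinner2_expand: "cinner2 x y = x$1 * cnj (y$1) + x$2 * cnj (y$2)"
  by (simp add: cinner2_def sum_2)

lemma munit_nth [simp]: "munit k l $ i $ j = (if i = k \<and> j = l then 1 else 0)"
  by (simp add: munit_def)

lemma smult2_nth [simp]: "smult2 c A $ i $ j = c * A$i$j"
  by (simp add: smult2_def)

lemma adj2_nth [simp]: "adj2 A $ i $ j = cnj (A$j$i)"
  by (simp add: adj2_def)

lemma mat2_munit_expand:
  "(A::mat2) = smult2 (A$1$1) (munit 1 1) + smult2 (A$1$2) (munit 1 2)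
     + smult2 (A$2$1) (munit 2 1) + smult2 (A$2$2) (munit 2 2)"
  by (simp add: mat2_eq_iff)

lemma cmod_eq_iff_unimodular_cnj: "cmod a = cmod b \<longleftrightarrow> (\<exists>\<alpha>. cmod \<alpha> = 1 \<and> a = \<alpha> * cnj b)"
proof
  assume ab: "cmod a = cmod b"
  show "\<exists>\<alpha>. cmod \<alpha> = 1 \<and> a = \<alpha> * cnj b"
  proof (cases "b = 0")
    case True
    then show ?thesis using ab by (intro exI[of _ 1]) simp
  next
    case False
    then show ?thesis using ab by (intro exI[of _ "a / cnj b"]) (simp add: norm_divide)
  qed
qed (auto simp: norm_mult)

lemma cnj_mult_self_eq_quarter:
  assumes "cmod w = 1/2"
  shows "cnj w * w = 1/4"
proof -
  have "cnj w * w = of_real ((cmod w)\<^sup>2)"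
    by (metis complex_norm_square mult.commute)
  also have "\<dots> = 1/4"
    unfolding assms by (simp add: power_divide)
  finally show ?thesis .
qed

subsection \<open>States on M_2\<close>

lemma state_expand:
  assumes "is_state \<phi>"
  shows "\<phi> A = A$1$1 * \<phi> (munit 1 1) + A$1$2 * \<phi> (munit 1 2)
    + A$2$1 * \<phi> (munit 2 1) + A$2$2 * \<phi> (munit 2 2)"
  using assms by (subst mat2_munit_expand) (simp add: is_state_def)

definition rank_one :: "cvec2 \<Rightarrow> mat2" where
  "rank_one z = (\<chi> i j. z$i * cnj (z$j))"

lemma rank_one_nth [simp]: "rank_one z $ i $ j = z$i * cnj (z$j)"
  by (simp add: rank_one_def)

lemma positive2_rank_one: "positive2 (rank_one z)"
  unfolding positive2_def
proof
  fix x :: cvec2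
  define u where "u = z$1 * cnj (x$1) + z$2 * cnj (x$2)"
  have "cinner2 (rank_one z *v x) x = u * cnj u"
    by (simp add: cinner2_expand matrix_vector_mult_2 algebra_simps u_def)
  also have "\<dots> = of_real ((cmod u)\<^sup>2)"
    by (rule complex_norm_square[symmetric])
  finally show "Im (cinner2 (rank_one z *v x) x) = 0 \<and> 0 \<le> Re (cinner2 (rank_one z *v x) x)"
    by simp
qed

lemma state_rank_one:
  assumes "is_state \<phi>"
  shows "Im (\<phi> (rank_one z)) = 0" "0 \<le> Re (\<phi> (rank_one z))"
  using assms positive2_rank_one by (simp_all add: is_state_def)

lemma state_diag_nonneg:
  assumes "is_state \<phi>"
  shows "Im (\<phi> (munit i i)) = 0" "0 \<le> Re (\<phi> (munit i i))"
proof -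
  have "rank_one (axis i 1) = munit i i"
    by (simp add: vec_eq_iff axis_def)
  then show "Im (\<phi> (munit i i)) = 0" "0 \<le> Re (\<phi> (munit i i))"
    using state_rank_one[OF assms, of "axis i 1"] by simp_all
qed

lemma state_diag_sum:
  assumes "is_state \<phi>"
  shows "Re (\<phi> (munit 1 1)) + Re (\<phi> (munit 2 2)) = 1"
proof -
  have "\<phi> (munit 1 1) + \<phi> (munit 2 2) = 1"
    using assms state_expand[OF assms, of "mat 1"] by (simp add: is_state_def mat_def)
  then show ?thesis
    by (metis one_complex.sel(1) plus_complex.sel(1))
qed

lemma state_munit21_eq_cnj:
  assumes "is_state \<phi>"
  shows "\<phi> (munit 2 1) = cnj (\<phi> (munit 1 2))"
proof -
  note expand = state_expand[OF assms]
  have "Im (\<phi> (munit 1 2) + \<phi> (munit 2 1)) = 0"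
    using state_rank_one(1)[OF assms, of "vector [1, 1]"] expand[of "rank_one (vector [1, 1])"]
      state_diag_nonneg(1)[OF assms, of 1] state_diag_nonneg(1)[OF assms, of 2]
    by (simp add: complex_eq_iff)
  moreover have "Re (\<phi> (munit 1 2) - \<phi> (munit 2 1)) = 0"
    using state_rank_one(1)[OF assms, of "vector [1, \<i>]"] expand[of "rank_one (vector [1, \<i>])"]
      state_diag_nonneg(1)[OF assms, of 1] state_diag_nonneg(1)[OF assms, of 2]
    by (simp add: complex_eq_iff)
  ultimately show ?thesis
    by (simp add: complex_eq_iff)
qed

text \<open>Positivity at the vectors (-cnj w, p) and (q, -w) gives p (pq - |w|^2) \<ge> 0 and
  q (pq - |w|^2) \<ge> 0; add them, using p + q = 1.\<close>
lemma state_offdiag_sq_le: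
  assumes st: "is_state \<phi>"
  defines "p \<equiv> Re (\<phi> (munit 1 1))" and "q \<equiv> Re (\<phi> (munit 2 2))" and "w \<equiv> \<phi> (munit 1 2)"
  shows "(cmod w)\<^sup>2 \<le> p * q"
proof -
  have entries: "\<phi> (munit 1 1) = of_real p" "\<phi> (munit 2 2) = of_real q" "\<phi> (munit 2 1) = cnj w"
    using state_diag_nonneg(1)[OF st] state_munit21_eq_cnj[OF st]
    by (simp_all add: complex_eq_iff p_def q_def w_def)
  have ww: "w * cnj w = of_real ((cmod w)\<^sup>2)"
    by (rule complex_norm_square[symmetric])
  have "\<phi> (rank_one (vector [- cnj w, of_real p])) = of_real (p * (p * q - (cmod w)\<^sup>2))"
    using state_expand[OF st, of "rank_one (vector [- cnj w, of_real p])"] entries ww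
    by (simp add: w_def[symmetric] power2_eq_square; algebra)
  then have "0 \<le> p * (p * q - (cmod w)\<^sup>2)"
    using state_rank_one(2)[OF st, of "vector [- cnj w, of_real p]"] by simp
  moreover have "\<phi> (rank_one (vector [of_real q, - w])) = of_real (q * (p * q - (cmod w)\<^sup>2))"
    using state_expand[OF st, of "rank_one (vector [of_real q, - w])"] entries ww
    by (simp add: w_def[symmetric] power2_eq_square; algebra)
  then have "0 \<le> q * (p * q - (cmod w)\<^sup>2)"
    using state_rank_one(2)[OF st, of "vector [of_real q, - w]"] by simp
  ultimately have "0 \<le> (p + q) * (p * q - (cmod w)\<^sup>2)"
    by (simp add: distrib_right)
  then show ?thesis
    using state_diag_sum[OF st] by (simp add: p_def q_def)
qed

lemma state_offdiag_le_half:
  assumes "is_state \<phi>"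
  shows "cmod (\<phi> (munit 1 2)) \<le> 1/2"
    and "cmod (\<phi> (munit 1 2)) = 1/2 \<Longrightarrow> Re (\<phi> (munit 1 1)) = 1/2"
proof -
  define p where "p = Re (\<phi> (munit 1 1))"
  have "Re (\<phi> (munit 2 2)) = 1 - p"
    using state_diag_sum[OF assms] by (simp add: p_def)
  then have "(cmod (\<phi> (munit 1 2)))\<^sup>2 \<le> p * (1 - p)"
    using state_offdiag_sq_le[OF assms] by (simp add: p_def)
  also have "\<dots> = 1/4 - (p - 1/2)\<^sup>2"
    by (simp add: power2_eq_square algebra_simps)
  finally have sq: "(cmod (\<phi> (munit 1 2)))\<^sup>2 + (p - 1/2)\<^sup>2 \<le> (1/2)\<^sup>2"
    by (simp add: power2_eq_square)
  then have "(cmod (\<phi> (munit 1 2)))\<^sup>2 \<le> (1/2)\<^sup>2"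
    using zero_le_power2[of "p - 1/2"] by linarith
  then show "cmod (\<phi> (munit 1 2)) \<le> 1/2"
    by (rule power2_le_imp_le) simp
  show "Re (\<phi> (munit 1 1)) = 1/2" if "cmod (\<phi> (munit 1 2)) = 1/2"
    using sq that by (simp add: p_def)
qed

lemma state_eqI:
  assumes "is_state \<phi>" "is_state \<theta>"
    and "Re (\<phi> (munit 1 1)) = Re (\<theta> (munit 1 1))" "\<phi> (munit 1 2) = \<theta> (munit 1 2)"
  shows "\<phi> = \<theta>"
proof
  fix A
  have "Re (\<phi> (munit 2 2)) = Re (\<theta> (munit 2 2))"
    using state_diag_sum[OF assms(1)] state_diag_sum[OF assms(2)] assms(3) by linarith
  then have "\<phi> (munit 1 1) = \<theta> (munit 1 1)" "\<phi> (munit 2 2) = \<theta> (munit 2 2)"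
    using assms(3) state_diag_nonneg(1)[OF assms(1)] state_diag_nonneg(1)[OF assms(2)]
    by (simp_all add: complex_eq_iff)
  moreover have "\<phi> (munit 2 1) = \<theta> (munit 2 1)"
    using assms(4) state_munit21_eq_cnj[OF assms(1)] state_munit21_eq_cnj[OF assms(2)] by simp
  ultimately show "\<phi> A = \<theta> A"
    using state_expand[OF assms(1), of A] state_expand[OF assms(2), of A] assms(4) by simp
qed

lemma state_on_opsysS:
  assumes "is_state \<phi>"
  shows "\<phi> (smult2 a (mat 1) + smult2 b E12 + smult2 c E21)
    = a + b * \<phi> (munit 1 2) + c * cnj (\<phi> (munit 1 2))"
proof -
  let ?s = "smult2 a (mat 1) + smult2 b E12 + smult2 c E21"
  have "?s$1$1 = a" "?s$1$2 = b" "?s$2$1 = c" "?s$2$2 = a"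
    by (simp_all add: mat_def E12_def E21_def)
  moreover have "\<phi> (munit 1 1) + \<phi> (munit 2 2) = 1"
    using state_diag_nonneg(1)[OF assms] state_diag_sum[OF assms] by (simp add: complex_eq_iff)
  then have "a * \<phi> (munit 1 1) + a * \<phi> (munit 2 2) = a"
    by (metis distrib_left mult_1_right)
  ultimately show ?thesis
    using state_expand[OF assms, of ?s] state_munit21_eq_cnj[OF assms] by (simp add: algebra_simps)
qed

lemma states_agree_on_opsysS:
  assumes "is_state \<phi>" "is_state \<theta>" "\<phi> (munit 1 2) = \<theta> (munit 1 2)" "s \<in> opsysS"
  shows "\<phi> s = \<theta> s"
  using assms state_on_opsysS[OF assms(1)] state_on_opsysS[OF assms(2)] by (auto simp: opsysS_def)

subsection \<open>Vector states\<close>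

lemma omega_munit [simp]:
  "omega \<xi> (munit 1 1) = of_real ((cmod (\<xi>$1))\<^sup>2)"
  "omega \<xi> (munit 1 2) = \<xi>$2 * cnj (\<xi>$1)"
  by (simp_all add: omega_def cinner2_expand matrix_vector_mult_2 complex_norm_square del: of_real_power)

lemma is_state_omega:
  assumes "norm \<xi> = 1"
  shows "is_state (omega \<xi>)"
  unfolding is_state_def
proof (intro conjI allI impI)
  show "omega \<xi> (A + B) = omega \<xi> A + omega \<xi> B" for A B
    by (simp add: omega_def cinner2_expand matrix_vector_mult_2 algebra_simps)
  show "omega \<xi> (smult2 c A) = c * omega \<xi> A" for c A
    by (simp add: omega_def cinner2_expand matrix_vector_mult_2 algebra_simps)
  show "Im (omega \<xi> A) = 0" "0 \<le> Re (omega \<xi> A)" if "positive2 A" for A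
    using that by (simp_all add: omega_def positive2_def)
  have "omega \<xi> (mat 1) = of_real ((cmod (\<xi>$1))\<^sup>2 + (cmod (\<xi>$2))\<^sup>2)"
    by (simp add: omega_def cinner2_expand matrix_vector_mult_2 mat_def complex_norm_square
        del: of_real_power)
  then show "omega \<xi> (mat 1) = 1"
    by (metis assms norm_cvec2_eq_1_iff of_real_1)
qed

lemma vector_state_exists:
  assumes "0 \<le> r" "r \<le> 1" "(cmod w)\<^sup>2 = r * (1 - r)"
  obtains \<eta> where "norm \<eta> = 1" "Re (omega \<eta> (munit 1 1)) = r" "omega \<eta> (munit 1 2) = w"
proof (cases "r = 0")
  case True
  then show ?thesis
    using assms that[of "vector [0, 1]"] by (simp add: norm_cvec2_eq_1_iff)
next
  case False
  define \<eta> :: cvec2 where "\<eta> = vector [of_real (sqrt r), w / of_real (sqrt r)]"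
  have r: "0 < r" "(sqrt r)\<^sup>2 = r"
    using False assms(1) by simp_all
  have "(cmod (\<eta>$1))\<^sup>2 = r" "(cmod (\<eta>$2))\<^sup>2 = 1 - r"
    using r assms(3) by (simp_all add: \<eta>_def norm_divide power_divide)
  moreover have "\<eta>$2 * cnj (\<eta>$1) = w"
    using r by (simp add: \<eta>_def)
  ultimately show ?thesis
    using that[of \<eta>] by (simp add: norm_cvec2_eq_1_iff)
qed

lemma omega_offdiag_eq_half_iff:
  assumes "norm \<xi> = 1"
  shows "cmod (omega \<xi> (munit 1 2)) = 1/2 \<longleftrightarrow> (\<exists>\<alpha>. cmod \<alpha> = 1 \<and> \<xi>$1 = \<alpha> * cnj (\<xi>$2))"
proof -
  define a b where "a = cmod (\<xi>$1)" and "b = cmod (\<xi>$2)"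
  have "a\<^sup>2 + b\<^sup>2 = 1"
    using assms by (simp add: norm_cvec2_eq_1_iff a_def b_def)
  moreover have "(a - b)\<^sup>2 = a\<^sup>2 + b\<^sup>2 - 2 * (a * b)"
    by (simp add: power2_diff)
  moreover have "cmod (omega \<xi> (munit 1 2)) = a * b"
    by (simp add: norm_mult a_def b_def)
  ultimately have "cmod (omega \<xi> (munit 1 2)) = 1/2 - (a - b)\<^sup>2 / 2"
    by linarith
  then show ?thesis
    by (simp add: a_def b_def cmod_eq_iff_unimodular_cnj)
qed

subsection \<open>Unique extension and peaking\<close>

lemma unique_ext_prop_offdiag_eq_half:
  assumes st: "is_state \<phi>" and uep: "unique_ext_prop \<phi>"
  shows "cmod (\<phi> (munit 1 2)) = 1/2"
proof (rule ccontr)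
  define w where "w = \<phi> (munit 1 2)"
  define d where "d = sqrt (1 - 4 * (cmod w)\<^sup>2)"
  assume "cmod (\<phi> (munit 1 2)) \<noteq> 1/2"
  then have "cmod w < 1/2"
    using state_offdiag_le_half(1)[OF st] by (simp add: w_def)
  then have "(cmod w)\<^sup>2 < 1/4"
    using power_strict_mono[of "cmod w" "1/2" 2] by (simp add: power_divide)
  then have d: "0 < d" "d \<le> 1" "d\<^sup>2 = 1 - 4 * (cmod w)\<^sup>2"
    by (simp_all add: d_def)
  have diag_of_extension: "Re (\<phi> (munit 1 1)) = r"
    if r: "0 \<le> r" "r \<le> 1" "(cmod w)\<^sup>2 = r * (1 - r)" for r
  proof -
    obtain \<eta> where \<eta>: "norm \<eta> = 1" "Re (omega \<eta> (munit 1 1)) = r" "omega \<eta> (munit 1 2) = w"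
      using vector_state_exists[OF r] .
    have "\<forall>s\<in>opsysS. omega \<eta> s = \<phi> s"
      using states_agree_on_opsysS[OF is_state_omega[OF \<eta>(1)] st] \<eta>(3) by (simp add: w_def)
    then have "omega \<eta> = \<phi>"
      using uep is_state_omega[OF \<eta>(1)] unfolding unique_ext_prop_def by blast
    then show ?thesis
      using \<eta>(2) by simp
  qed
  have "(1 + d) / 2 * (1 - (1 + d) / 2) = (1 - d\<^sup>2) / 4"
    "(1 - d) / 2 * (1 - (1 - d) / 2) = (1 - d\<^sup>2) / 4"
    by (simp_all add: power2_eq_square field_simps)
  then have "(cmod w)\<^sup>2 = (1 + d) / 2 * (1 - (1 + d) / 2)"
    "(cmod w)\<^sup>2 = (1 - d) / 2 * (1 - (1 - d) / 2)"
    using d(3) by simp_all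
  then have "Re (\<phi> (munit 1 1)) = (1 + d) / 2" "Re (\<phi> (munit 1 1)) = (1 - d) / 2"
    using d(1,2) by (intro diag_of_extension; simp)+
  then show False
    using d(1) by simp
qed

definition peak_element :: "complex \<Rightarrow> mat2" where
  "peak_element w = smult2 (1/2) (mat 1) + smult2 (cnj w) E12 + smult2 w E21"

lemma peak_element_nth:
  "peak_element w $1$1 = 1/2" "peak_element w $1$2 = cnj w"
  "peak_element w $2$1 = w" "peak_element w $2$2 = 1/2"
  by (simp_all add: peak_element_def mat_def E12_def E21_def)

lemma peak_element_in_opsysS: "peak_element w \<in> opsysS"
  unfolding opsysS_def peak_element_def by blast

lemma adj2_peak_element: "adj2 (peak_element w) = peak_element w"
  by (simp add: mat2_eq_iff peak_element_nth)

text \<open>For |w| = 1/2, s = peak_element w is the orthogonal projection onto the span of (1, 2w),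
  so |s x|^2 + |(I - s) x|^2 = |x|^2.\<close>
lemma mnorm2_peak_element:
  assumes w: "cmod w = 1/2"
  shows "mnorm2 (peak_element w) = 1"
proof -
  let ?s = "peak_element w"
  have w2: "(Re w)\<^sup>2 + (Im w)\<^sup>2 = 1/4"
    unfolding cmod_power2[symmetric] w by (simp add: power_divide)
  have "norm (?s *v x) \<le> 1 * norm x" for x
  proof -
    have "(norm (?s *v x))\<^sup>2 + ((cmod (x$1/2 - cnj w * x$2))\<^sup>2 + (cmod (x$2/2 - w * x$1))\<^sup>2)
        = (norm x)\<^sup>2 * (1/2 + 2 * ((Re w)\<^sup>2 + (Im w)\<^sup>2))"
      unfolding norm_cvec2_sq cmod_power2
      by (simp add: matrix_vector_mult_2 peak_element_nth power2_eq_square algebra_simps)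
    also have "\<dots> = (norm x)\<^sup>2"
      using w2 by simp
    finally have "(norm (?s *v x))\<^sup>2 \<le> (norm x)\<^sup>2"
      by (smt (verit) zero_le_power2)
    then show ?thesis
      by (simp add: power2_le_iff_abs_le)
  qed
  then have "onorm (\<lambda>x. ?s *v x) \<le> 1"
    by (rule onorm_le)
  moreover have "1 \<le> onorm (\<lambda>x. ?s *v x)"
  proof -
    define x0 :: cvec2 where "x0 = vector [1, 2 * w]"
    have x0: "x0$1 = 1" "x0$2 = 2 * w"
      by (simp_all add: x0_def)
    have quarter: "w * cnj w = 1/4"
      using cnj_mult_self_eq_quarter[OF w] by (simp add: mult.commute)
    have "(?s *v x0)$1 = 1/2 + 2 * (w * cnj w)"
      by (simp add: x0 matrix_vector_mult_2 peak_element_nth algebra_simps)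
    also have "\<dots> = 1"
      unfolding quarter by simp
    finally have "?s *v x0 = x0"
      using x0 by (simp add: vec_eq_iff forall_2 matrix_vector_mult_2 peak_element_nth)
    moreover have "x0 \<noteq> 0"
      using x0(1) by auto
    ultimately show ?thesis
      using onorm[OF matrix_vector_mul_bounded_linear[of ?s], of x0] by simp
  qed
  ultimately show ?thesis
    unfolding mnorm2_def by simp
qed

lemma state_peak_element:
  assumes "is_state \<theta>"
  shows "\<theta> (peak_element w) = of_real (1/2 + 2 * Re (cnj w * \<theta> (munit 1 2)))"
proof -
  have "\<theta> (peak_element w) = 1/2 + (cnj w * \<theta> (munit 1 2) + cnj (cnj w * \<theta> (munit 1 2)))"
    using state_on_opsysS[OF assms, of "1/2" "cnj w" w] by (simp add: peak_element_def add.assoc)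
  also have "\<dots> = of_real (1/2 + 2 * Re (cnj w * \<theta> (munit 1 2)))"
    by (simp only: complex_add_cnj) simp
  finally show ?thesis .
qed

lemma S_peaking_state_if_offdiag_eq_half:
  assumes st: "is_state \<phi>" and half: "cmod (\<phi> (munit 1 2)) = 1/2"
  shows "S_peaking_state \<phi>"
proof -
  define w where "w = \<phi> (munit 1 2)"
  have ww: "cnj w * w = 1/4"
    using cnj_mult_self_eq_quarter half by (simp add: w_def)
  have peak: "\<phi> (peak_element w) = 1"
    using state_peak_element[OF st, of w] unfolding w_def[symmetric] ww by simp
  have "cmod (\<theta> (peak_element w)) < 1" if th: "is_state \<theta>" and ne: "\<theta> \<noteq> \<phi>" for \<theta>
  proof (rule ccontr)
    define z where "z = cnj w * \<theta> (munit 1 2)"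
    assume not_lt: "\<not> cmod (\<theta> (peak_element w)) < 1"
    have "cmod (\<theta> (peak_element w)) = \<bar>1/2 + 2 * Re z\<bar>"
      unfolding state_peak_element[OF th] z_def by (rule norm_of_real)
    then have "1 \<le> \<bar>1/2 + 2 * Re z\<bar>"
      using not_lt by linarith
    moreover have "cmod z \<le> 1/4"
      using state_offdiag_le_half(1)[OF th] unfolding z_def norm_mult complex_mod_cnj w_def half
      by simp
    moreover have "\<bar>Re z\<bar> \<le> cmod z"
      by (rule abs_Re_le_cmod)
    ultimately have re: "Re z = 1/4" and cm: "cmod z = 1/4"
      by linarith+
    have "(Im z)\<^sup>2 = 0"
      using cmod_power2[of z] unfolding re cm by simp
    then have "z = 1/4"
      using re by (simp add: complex_eq_iff)
    then have "cnj w * \<theta> (munit 1 2) = cnj w * w"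
      by (simp only: ww z_def)
    moreover have "cnj w \<noteq> 0"
      using ww by auto
    ultimately have offdiag: "\<theta> (munit 1 2) = \<phi> (munit 1 2)"
      by (simp add: w_def)
    then have "Re (\<theta> (munit 1 1)) = Re (\<phi> (munit 1 1))"
      using state_offdiag_le_half(2)[OF th] state_offdiag_le_half(2)[OF st] half by simp
    then show False
      using state_eqI[OF th st _ offdiag] ne by blast
  qed
  moreover have "mnorm2 (peak_element w) = 1"
    using mnorm2_peak_element half by (simp add: w_def)
  ultimately show ?thesis
    unfolding S_peaking_state_def using peak_element_in_opsysS adj2_peak_element peak by blast
qed

lemma S_peaking_state_imp_unique_ext_prop: "S_peaking_state \<psi> \<Longrightarrow> unique_ext_prop \<psi>"
  unfolding S_peaking_state_def unique_ext_prop_def by (metis norm_one order_less_irrefl)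

subsection \<open>The pure state of e1\<close>

lemma state_eq_omega_axis1:
  assumes st: "is_state \<theta>" and p: "Re (\<theta> (munit 1 1)) = 1"
  shows "\<theta> = omega (axis 1 1)"
proof (rule state_eqI[OF st is_state_omega])
  show "norm (axis 1 1 :: cvec2) = 1"
    by (rule norm_axis1_cvec2)
  show "Re (\<theta> (munit 1 1)) = Re (omega (axis 1 1) (munit 1 1))"
    using p by (simp add: axis_def)
  have "(cmod (\<theta> (munit 1 2)))\<^sup>2 \<le> 0"
    using state_offdiag_sq_le[OF st] state_diag_sum[OF st] p by simp
  then show "\<theta> (munit 1 2) = omega (axis 1 1) (munit 1 2)"
    by (simp add: axis_def)
qed

lemma pure_state_omega_axis1: "pure_state (omega (axis 1 1))"
  unfolding pure_state_def
proof (intro conjI allI impI)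
  show "is_state (omega (axis 1 1))"
    by (rule is_state_omega[OF norm_axis1_cvec2])
  fix \<phi>1 \<phi>2 and t :: real
  assume "is_state \<phi>1 \<and> is_state \<phi>2 \<and> 0 < t \<and> t < 1
    \<and> omega (axis 1 1) = (\<lambda>A. of_real t * \<phi>1 A + of_real (1 - t) * \<phi>2 A)"
  then have st: "is_state \<phi>1" "is_state \<phi>2" and t: "0 < t" "t < 1"
    and mix: "omega (axis 1 1) (munit 1 1)
      = of_real t * \<phi>1 (munit 1 1) + of_real (1 - t) * \<phi>2 (munit 1 1)"
    by auto
  define p1 where "p1 = Re (\<phi>1 (munit 1 1))"
  define p2 where "p2 = Re (\<phi>2 (munit 1 1))"
  have "p1 \<le> 1" "p2 \<le> 1"
    using state_diag_nonneg(2)[of _ 2] state_diag_sum st unfolding p1_def p2_def by (smt (verit))+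
  then have "0 \<le> t * (1 - p1)" "0 \<le> (1 - t) * (1 - p2)"
    using t by simp_all
  moreover have "t * (1 - p1) + (1 - t) * (1 - p2) = 0"
    using arg_cong[OF mix, of Re] by (simp add: p1_def p2_def axis_def algebra_simps)
  ultimately have "t * (1 - p1) = 0" "(1 - t) * (1 - p2) = 0"
    by linarith+
  then have "p1 = 1" "p2 = 1"
    using t by simp_all
  then show "\<phi>1 = omega (axis 1 1)" "\<phi>2 = omega (axis 1 1)"
    using state_eq_omega_axis1 st unfolding p1_def p2_def by auto
qed

theorem mainTheorem9:
  shows "(\<forall>\<xi>::cvec2. norm \<xi> = 1 \<longrightarrow>
            \<not> (\<exists>\<alpha>. cmod \<alpha> = 1 \<and> \<xi>$1 = \<alpha> * cnj (\<xi>$2)) \<longrightarrow>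
            \<not> unique_ext_prop (omega \<xi>))
       \<and> (\<forall>(\<xi>::cvec2) \<alpha>. norm \<xi> = 1 \<longrightarrow> cmod \<alpha> = 1 \<longrightarrow> \<xi>$1 = \<alpha> * cnj (\<xi>$2) \<longrightarrow>
            S_peaking_state (omega \<xi>))
       \<and> (\<forall>\<psi>. pure_state \<psi> \<and> unique_ext_prop \<psi> \<longrightarrow> S_peaking_state \<psi>)
       \<and> \<not> (\<forall>\<psi>. pure_state \<psi> \<longrightarrow> S_peaking_state \<psi>)"
proof (intro conjI allI impI)
  show "\<not> unique_ext_prop (omega \<xi>)"
    if "norm \<xi> = 1" "\<not> (\<exists>\<alpha>. cmod \<alpha> = 1 \<and> \<xi>$1 = \<alpha> * cnj (\<xi>$2))" for \<xi> :: cvec2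
    using that unique_ext_prop_offdiag_eq_half[OF is_state_omega] omega_offdiag_eq_half_iff
    by blast
  show "S_peaking_state (omega \<xi>)"
    if "norm \<xi> = 1" "cmod \<alpha> = 1" "\<xi>$1 = \<alpha> * cnj (\<xi>$2)" for \<xi> :: cvec2 and \<alpha>
    using that S_peaking_state_if_offdiag_eq_half[OF is_state_omega] omega_offdiag_eq_half_iff
    by blast
  show "S_peaking_state \<psi>" if "pure_state \<psi> \<and> unique_ext_prop \<psi>" for \<psi>
    using that unique_ext_prop_offdiag_eq_half S_peaking_state_if_offdiag_eq_half
    unfolding pure_state_def by blast
  have "cmod (omega (axis 1 1) (munit 1 2)) \<noteq> 1/2"
    by (simp add: axis_def)
  then have "\<not> unique_ext_prop (omega (axis 1 1))"
    using unique_ext_prop_offdiag_eq_half is_state_omega[OF norm_axis1_cvec2] by blast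
  then show "\<not> (\<forall>\<psi>. pure_state \<psi> \<longrightarrow> S_peaking_state \<psi>)"
    using pure_state_omega_axis1 S_peaking_state_imp_unique_ext_prop by blast
qed

end
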